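(* Assume the setting of the context. Let $\delta>0$, let $\alpha$ be a finite measurable partition of $\Theta$ with $\operatorname{diam}(\alpha)<\delta$, and let $\beta$ be a partition of $\mathcal{X}$ according to central words with $\operatorname{diam}(\beta)<\delta$. Then for every Borel probability measure $\eta$ on $\Theta\times\mathcal{X}$, every $y\in\mathcal{Y}$, and every $n\ge1$, \[ \int g_n(\theta,x,y)\,d\eta(\theta,x)-KL(\eta:P_0\mid\alpha\times\beta_n)\le\log\Bigl[\int\exp(g_n(\theta,x,y))\,dP_0(\theta,x)\Bigr]+\sum_{k=0}^{n-1}\rho_\delta(T^ky). \]
   Context: Observed system: $\mathcal{Y}$ is a complete separable metric space, $T$ is Borel, and $\nu$ is a $T$-invariant ergodic probability measure. Model system: $\mathcal{X}\subset\mathcal{A}^{\mathbb{Z}}$ is a mixing shift of finite type, with left shift $(Sx)_i=x_{i+1}$ and metric $d_{\mathcal{X}}(x,y)=2^{-\inf\{|m|:x_m\ne y_m\}}$. $\Theta$ is a compact metric space with metric $d_\Theta$, and $\{\mu_\theta\}$ is the family of Gibbs measures of a regular (Hölder-norm-continuous) family of Hölder potentials $f_\theta$. Loss: $\ell:\Theta\times\mathcal{X}\times\mathcal{Y}\to\mathbb{R}$ is continuous, with $\sup_{\theta,x}|\ell(\theta,x,y)|\le\ell^*(y)$ for a $\nu$-integrable $\ell^*$. For each $\delta>0$, $\rho_\delta:\mathcal{Y}\to(0,\infty)$ is a measurable function with $|\ell(\theta,x,y)-\ell(\theta',x',y)|\le\rho_\delta(y)$ whenever $\max(d_\Theta(\theta,\theta'),d_{\mathcal{X}}(x,x'))\le\delta$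 (and $\int\rho_\delta d\nu\to0$ as $\delta\to0^+$). Set $g=-\ell$ and $g_n(\theta,x,y)=-\sum_{k=0}^{n-1}\ell(\theta,S^kx,T^ky)$. Prior: $\pi_0$ is a fully supported probability on $\Theta$, and $P_0(E)=\int\int\mathbf{1}_E\,d\mu_\theta\,d\pi_0$. Partitions: a partition of $\mathcal{X}$ according to central words is one of the form $\{[x_{-m}^m]:x\in\mathcal{X}\}$ for some $m\ge0$, where $[x_{-m}^m]=\{z:z_i=x_i,|i|\le m\}$. Also $\beta_n=\bigvee_{k<n}S^{-k}\beta$ and $\alpha\times\beta_n=\{A\times B\}$. Divergence: $KL(\eta:\gamma\mid\xi)=\sum_{C\in\xi}\eta(C)\log(\eta(C)/\gamma(C))$ if $\gamma(C)=0\Rightarrow\eta(C)=0$ on $\xi$, and $+\infty$ otherwise, with $0\log(0/x)=0$. *)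

theory Defs
  imports "HOL-Probability.Probability"
begin

definition shift :: "(int \<Rightarrow> 'a) \<Rightarrow> (int \<Rightarrow> 'a)" where
  "shift x = (\<lambda>i. x (i + 1))"

definition dX :: "(int \<Rightarrow> 'a) \<Rightarrow> (int \<Rightarrow> 'a) \<Rightarrow> real" where
  "dX x y = (if x = y then 0
             else (1/2) ^ (LEAST k. \<exists>m. x m \<noteq> y m \<and> nat \<bar>m\<bar> = k))"

definition diamX :: "(int \<Rightarrow> 'a) set \<Rightarrow> real" where
  "diamX B = (if B = {} then 0 else (SUP p\<in>B \<times> B. dX (fst p) (snd p)))"

definition is_SFT :: "(int \<Rightarrow> 'a) set \<Rightarrow> bool" where
  "is_SFT X \<longleftrightarrow> (\<exists>F :: 'a list set. finite F \<and>
      X = {x. \<forall>w\<in>F. \<forall>i. \<not> (\<forall>j<length w. x (i + int j) = w ! j)})"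

definition openX :: "(int \<Rightarrow> 'a) set \<Rightarrow> (int \<Rightarrow> 'a) set \<Rightarrow> bool" where
  "openX X U \<longleftrightarrow> U \<subseteq> X \<and> (\<forall>x\<in>U. \<exists>e>0. \<forall>z\<in>X. dX x z < e \<longrightarrow> z \<in> U)"

definition top_mixing :: "(int \<Rightarrow> 'a) set \<Rightarrow> bool" where
  "top_mixing X \<longleftrightarrow> (\<forall>U V. openX X U \<and> openX X V \<and> U \<noteq> {} \<and> V \<noteq> {} \<longrightarrow>
      (\<exists>N. \<forall>n\<ge>N. {x\<in>U. (shift ^^ n) x \<in> V} \<noteq> {}))"

definition mixing_SFT :: "(int \<Rightarrow> 'a) set \<Rightarrow> bool" where
  "mixing_SFT X \<longleftrightarrow> is_SFT X \<and> X \<noteq> {} \<and> top_mixing X"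

text \<open>Measurable space on X: the (Borel = product) sigma-algebra, restricted to X.\<close>
definition MX :: "(int \<Rightarrow> 'a) set \<Rightarrow> (int \<Rightarrow> 'a) measure" where
  "MX X = restrict_space (PiM UNIV (\<lambda>_. count_space UNIV)) X"

definition cyl0 :: "(int \<Rightarrow> 'a) set \<Rightarrow> (int \<Rightarrow> 'a) \<Rightarrow> nat \<Rightarrow> (int \<Rightarrow> 'a) set" where
  "cyl0 X x n = {z\<in>X. \<forall>i. 0 \<le> i \<and> i < int n \<longrightarrow> z i = x i}"

definition cylC :: "(int \<Rightarrow> 'a) set \<Rightarrow> (int \<Rightarrow> 'a) \<Rightarrow> nat \<Rightarrow> (int \<Rightarrow> 'a) set" where
  "cylC X x m = {z\<in>X. \<forall>i. \<bar>i\<bar> \<le> int m \<longrightarrow> z i = x i}"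

definition central_partition :: "(int \<Rightarrow> 'a) set \<Rightarrow> nat \<Rightarrow> (int \<Rightarrow> 'a) set set" where
  "central_partition X m = {cylC X x m | x. x \<in> X}"

definition is_central_word_partition :: "(int \<Rightarrow> 'a) set \<Rightarrow> (int \<Rightarrow> 'a) set set \<Rightarrow> bool" where
  "is_central_word_partition X \<beta> \<longleftrightarrow> (\<exists>m. \<beta> = central_partition X m)"

definition join_partition :: "(int \<Rightarrow> 'a) set \<Rightarrow> (int \<Rightarrow> 'a) set set \<Rightarrow> nat \<Rightarrow> (int \<Rightarrow> 'a) set set" where
  "join_partition X \<beta> n = {C. C \<noteq> {} \<and> (\<exists>B. (\<forall>k<n. B k \<in> \<beta>) \<and>
       C = {x\<in>X. \<forall>k<n. (shift ^^ k) x \<in> B k})}"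

definition prod_partition :: "'t set set \<Rightarrow> 'x set set \<Rightarrow> ('t \<times> 'x) set set" where
  "prod_partition \<alpha> \<beta> = {A \<times> B | A B. A \<in> \<alpha> \<and> B \<in> \<beta>}"

definition finite_measurable_partition :: "'b measure \<Rightarrow> 'b set set \<Rightarrow> bool" where
  "finite_measurable_partition M P \<longleftrightarrow> finite P \<and> {} \<notin> P \<and> disjoint P \<and>
       \<Union>P = space M \<and> P \<subseteq> sets M"

definition holder :: "(int \<Rightarrow> 'a) set \<Rightarrow> real \<Rightarrow> ((int \<Rightarrow> 'a) \<Rightarrow> real) \<Rightarrow> bool" where
  "holder X a f \<longleftrightarrow> (\<exists>c. \<forall>x\<in>X. \<forall>y\<in>X. \<bar>f x - f y\<bar> \<le> c * dX x y powr a)"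

definition holder_norm :: "(int \<Rightarrow> 'a) set \<Rightarrow> real \<Rightarrow> ((int \<Rightarrow> 'a) \<Rightarrow> real) \<Rightarrow> real" where
  "holder_norm X a f = (SUP x\<in>X. \<bar>f x\<bar>) +
     (SUP p\<in>{(x,y). x \<in> X \<and> y \<in> X \<and> x \<noteq> y}. \<bar>f (fst p) - f (snd p)\<bar> / dX (fst p) (snd p) powr a)"

definition regular_family :: "'t::metric_space set \<Rightarrow> (int \<Rightarrow> 'a) set \<Rightarrow> ('t \<Rightarrow> (int \<Rightarrow> 'a) \<Rightarrow> real) \<Rightarrow> bool" where
  "regular_family Th X f \<longleftrightarrow> (\<exists>a>0. (\<forall>\<theta>\<in>Th. holder X a (f \<theta>)) \<and>
     (\<forall>\<theta>\<in>Th. \<forall>\<epsilon>>0. \<exists>d>0. \<forall>\<theta>'\<in>Th. dist \<theta> \<theta>' < d \<longrightarrow>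
         holder_norm X a (\<lambda>x. f \<theta> x - f \<theta>' x) < \<epsilon>))"

definition gibbs_measure :: "(int \<Rightarrow> 'a) set \<Rightarrow> ((int \<Rightarrow> 'a) \<Rightarrow> real) \<Rightarrow> (int \<Rightarrow> 'a) measure \<Rightarrow> bool" where
  "gibbs_measure X f \<mu> \<longleftrightarrow> prob_space \<mu> \<and> sets \<mu> = sets (MX X) \<and>
     (\<forall>E\<in>sets (MX X). emeasure \<mu> {x\<in>X. shift x \<in> E} = emeasure \<mu> E) \<and>
     (\<exists>P C. C \<ge> 1 \<and> (\<forall>x\<in>X. \<forall>n\<ge>1.
        exp (- real n * P + (\<Sum>k<n. f ((shift ^^ k) x))) / C \<le> measure \<mu> (cyl0 X x n) \<and>
        measure \<mu> (cyl0 X x n) \<le> C * exp (- real n * P + (\<Sum>k<n. f ((shift ^^ k) x)))))"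

definition MT :: "'t::metric_space set \<Rightarrow> 't measure" where
  "MT Th = restrict_space borel Th"

definition P0 :: "'t::metric_space set \<Rightarrow> (int \<Rightarrow> 'a) set \<Rightarrow> 't measure \<Rightarrow> ('t \<Rightarrow> (int \<Rightarrow> 'a) measure)
     \<Rightarrow> ('t \<times> (int \<Rightarrow> 'a)) measure" where
  "P0 Th X \<pi>0 \<mu> = measure_of (space (MT Th \<Otimes>\<^sub>M MX X)) (sets (MT Th \<Otimes>\<^sub>M MX X))
      (\<lambda>E. \<integral>\<^sup>+ \<theta>. (\<integral>\<^sup>+ x. indicator E (\<theta>, x) \<partial>\<mu> \<theta>) \<partial>\<pi>0)"

definition KL :: "'b measure \<Rightarrow> 'b measure \<Rightarrow> 'b set set \<Rightarrow> ereal" where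
  "KL \<eta> \<gamma> \<xi> = (if (\<forall>C\<in>\<xi>. measure \<gamma> C = 0 \<longrightarrow> measure \<eta> C = 0)
     then ereal (\<Sum>C\<in>\<xi>. if measure \<eta> C = 0 then 0
                        else measure \<eta> C * ln (measure \<eta> C / measure \<gamma> C))
     else \<infinity>)"

definition gn :: "('t \<Rightarrow> (int \<Rightarrow> 'a) \<Rightarrow> 'y \<Rightarrow> real) \<Rightarrow> ('y \<Rightarrow> 'y) \<Rightarrow> nat \<Rightarrow> 't \<Rightarrow> (int \<Rightarrow> 'a) \<Rightarrow> 'y \<Rightarrow> real" where
  "gn loss T n \<theta> x y = - (\<Sum>k<n. loss \<theta> ((shift ^^ k) x) ((T ^^ k) y))"

definition ergodic_invariant :: "'y measure \<Rightarrow> ('y \<Rightarrow> 'y) \<Rightarrow> bool" where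
  "ergodic_invariant \<nu> T \<longleftrightarrow>
     (\<forall>A\<in>sets \<nu>. emeasure \<nu> (T -` A \<inter> space \<nu>) = emeasure \<nu> A) \<and>
     (\<forall>A\<in>sets \<nu>. T -` A \<inter> space \<nu> = A \<longrightarrow> measure \<nu> A = 0 \<or> measure \<nu> A = 1)"

end

theory Submission
  imports Defs
begin

(* On a finite measurable partition xi, the Donsker-Varadhan inequality
     Sum_C eta(C) a_C - KL(eta : gamma | xi) <= log Sum_C gamma(C) exp a_C
   is ln t <= t - 1 applied cell by cell. Take xi = alpha x beta_n and a_C = sup_C g_n. On a cell
   A x D the parameters are delta-close, and for every k < n the points S^k x, S^k x' of D lie in a
   common cell of beta, so g_n varies by at most R = Sum_k rho_delta(T^k y) on the cell. Hence
   int g_n d eta <= Sum_C eta(C) a_C and Sum_C P0(C) exp a_C <= exp R * int exp g_n dP0. *)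

lemma finite_donsker_varadhan:
  fixes e g a :: "'c \<Rightarrow> real"
  assumes fin: "finite I" and e: "\<forall>C\<in>I. e C > 0" and g: "\<forall>C\<in>I. g C > 0"
    and s: "sum e I = 1"
  shows "(\<Sum>C\<in>I. e C * a C) - (\<Sum>C\<in>I. e C * ln (e C / g C)) \<le> ln (\<Sum>C\<in>I. g C * exp (a C))"
proof -
  have "I \<noteq> {}" using s by auto
  define Z where "Z = (\<Sum>C\<in>I. g C * exp (a C))"
  have Z_pos: "Z > 0" unfolding Z_def
    using fin \<open>I \<noteq> {}\<close> g by (intro sum_pos) auto
  have term_le: "e C * a C - e C * ln (e C / g C) - e C * ln Z \<le> g C * exp (a C) / Z - e C"
    if "C \<in> I" for C
  proof -
    have ec: "e C > 0" and gc: "g C > 0" using e g that by auto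
    have "e C * a C - e C * ln (e C / g C) - e C * ln Z = e C * ln (g C * exp (a C) / (e C * Z))"
      using ec gc Z_pos by (simp add: ln_div ln_mult algebra_simps)
    also have "\<dots> \<le> e C * (g C * exp (a C) / (e C * Z) - 1)"
      using ec gc Z_pos by (intro mult_left_mono ln_le_minus_one) auto
    also have "\<dots> = g C * exp (a C) / Z - e C"
      using ec Z_pos by (simp add: field_simps)
    finally show ?thesis .
  qed
  have "(\<Sum>C\<in>I. e C * a C - e C * ln (e C / g C) - e C * ln Z) \<le> (\<Sum>C\<in>I. g C * exp (a C) / Z - e C)"
    using term_le by (intro sum_mono) auto
  also have "\<dots> = 0"
    using Z_pos s by (simp add: sum_subtractf sum_divide_distrib[symmetric] Z_def)
  finally have "(\<Sum>C\<in>I. e C * a C) - (\<Sum>C\<in>I. e C * ln (e C / g C)) - (\<Sum>C\<in>I. e C) * ln Z \<le> 0"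
    by (simp add: sum_subtractf sum_distrib_right)
  then show ?thesis
    using s Z_def by simp
qed

lemma sum_measure_partition:
  assumes "finite_measure M" "finite_measurable_partition M \<xi>"
  shows "(\<Sum>C\<in>\<xi>. measure M C) = measure M (space M)"
proof -
  have "measure M (\<Union>C\<in>\<xi>. C) = (\<Sum>C\<in>\<xi>. measure M C)"
    using assms by (intro measure_finite_Union)
      (auto simp: finite_measurable_partition_def disjoint_family_on_def disjoint_def
        finite_measure.emeasure_finite)
  then show ?thesis
    using assms(2) by (simp add: finite_measurable_partition_def)
qed

lemma integral_step_function:
  fixes v :: "'b set \<Rightarrow> real"
  assumes "finite_measure M" "finite \<xi>" "\<xi> \<subseteq> sets M"
  shows "integrable M (\<lambda>p. \<Sum>C\<in>\<xi>. v C * indicator C p)"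
    and "(\<integral>p. (\<Sum>C\<in>\<xi>. v C * indicator C p) \<partial>M) = (\<Sum>C\<in>\<xi>. measure M C * v C)"
proof -
  have int: "integrable M (\<lambda>p. v C * indicator C p)" if "C \<in> \<xi>" for C
    using assms that finite_measure.emeasure_finite[OF assms(1)]
    by (intro integrable_mult_right integrable_real_indicator) (auto simp: less_top[symmetric])
  then show "integrable M (\<lambda>p. \<Sum>C\<in>\<xi>. v C * indicator C p)"
    by (rule Bochner_Integration.integrable_sum)
  have "(\<integral>p. (\<Sum>C\<in>\<xi>. v C * indicator C p) \<partial>M) = (\<Sum>C\<in>\<xi>. \<integral>p. v C * indicator C p \<partial>M)"
    using int by (rule Bochner_Integration.integral_sum)
  also have "\<dots> = (\<Sum>C\<in>\<xi>. measure M C * v C)"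
    using assms(3) sets.sets_into_space by (intro sum.cong) (auto simp: Int_absorb2)
  finally show "(\<integral>p. (\<Sum>C\<in>\<xi>. v C * indicator C p) \<partial>M) = (\<Sum>C\<in>\<xi>. measure M C * v C)" .
qed

lemma integral_le_partition_sum:
  assumes "finite_measure M" "finite_measurable_partition M \<xi>" "integrable M h"
    and "\<And>C p. C \<in> \<xi> \<Longrightarrow> p \<in> C \<Longrightarrow> h p \<le> a C"
  shows "(\<integral>p. h p \<partial>M) \<le> (\<Sum>C\<in>\<xi>. measure M C * a C)"
proof -
  have \<xi>: "finite \<xi>" "disjoint \<xi>" "\<Union>\<xi> = space M" "\<xi> \<subseteq> sets M"
    using assms(2) by (auto simp: finite_measurable_partition_def)
  have "(\<integral>p. h p \<partial>M) \<le> (\<integral>p. (\<Sum>C\<in>\<xi>. a C * indicator C p) \<partial>M)"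
  proof (rule integral_mono[OF assms(3) integral_step_function(1)[OF assms(1) \<xi>(1,4)]])
    fix p assume "p \<in> space M"
    then obtain C where C: "C \<in> \<xi>" "p \<in> C" using \<xi>(3) by blast
    have "disjoint_family_on id \<xi>"
      using \<xi>(2) by (auto simp: disjoint_family_on_def disjoint_def)
    then have "(\<Sum>C'\<in>\<xi>. a C' * indicator C' p) = a C"
      using sum_indicator_disjoint_family[where A=id and f=a] C \<xi>(1) by simp
    with assms(4) C show "h p \<le> (\<Sum>C\<in>\<xi>. a C * indicator C p)" by simp
  qed
  then show ?thesis
    using integral_step_function(2)[OF assms(1) \<xi>(1,4)] by simp
qed

lemma partition_sum_le_integral:
  assumes "finite_measure M" "finite_measurable_partition M \<xi>" "integrable M h"
    and "\<And>C p. C \<in> \<xi> \<Longrightarrow> p \<in> C \<Longrightarrow> a C \<le> h p"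
  shows "(\<Sum>C\<in>\<xi>. measure M C * a C) \<le> (\<integral>p. h p \<partial>M)"
proof -
  have "(\<integral>p. - h p \<partial>M) \<le> (\<Sum>C\<in>\<xi>. measure M C * - a C)"
    using assms by (intro integral_le_partition_sum) auto
  then show ?thesis by (simp add: sum_negf)
qed

lemma sum_measure_prob_partition:
  assumes "prob_space \<eta>" "finite_measurable_partition \<eta> \<xi>"
  shows "(\<Sum>C\<in>\<xi>. measure \<eta> C) = 1"
  using assms sum_measure_partition prob_space.prob_space prob_space_def by metis

lemma KL_partition_donsker_varadhan:
  assumes \<eta>: "prob_space \<eta>" and \<xi>: "finite_measurable_partition \<eta> \<xi>"
  shows "ereal (\<Sum>C\<in>\<xi>. measure \<eta> C * a C) - KL \<eta> \<gamma> \<xi>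
           \<le> ereal (ln (\<Sum>C\<in>\<xi>. measure \<gamma> C * exp (a C)))"
proof (cases "\<forall>C\<in>\<xi>. measure \<gamma> C = 0 \<longrightarrow> measure \<eta> C = 0")
  case False
  then have "KL \<eta> \<gamma> \<xi> = \<infinity>" by (auto simp: KL_def)
  then show ?thesis by simp
next
  case True
  have fin: "finite \<xi>" using \<xi> by (simp add: finite_measurable_partition_def)
  define I where "I = {C\<in>\<xi>. measure \<eta> C \<noteq> 0}"
  have I: "finite I" "I \<subseteq> \<xi>" using fin by (auto simp: I_def)
  have \<eta>_pos: "\<forall>C\<in>I. measure \<eta> C > 0" and \<gamma>_pos: "\<forall>C\<in>I. measure \<gamma> C > 0"
    using True by (auto simp: I_def less_le)
  have sum_I: "(\<Sum>C\<in>I. measure \<eta> C * v C) = (\<Sum>C\<in>\<xi>. measure \<eta> C * v C)" for v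
    unfolding I_def using fin by (intro sum.mono_neutral_left) auto
  have \<eta>_I: "sum (measure \<eta>) I = 1"
    using sum_I[of "\<lambda>_. 1"] sum_measure_prob_partition[OF \<eta> \<xi>] by simp
  have KL_I: "KL \<eta> \<gamma> \<xi> = ereal (\<Sum>C\<in>I. measure \<eta> C * ln (measure \<eta> C / measure \<gamma> C))"
    using True fin unfolding KL_def I_def by (auto simp: sum.inter_filter intro!: sum.cong)
  have "0 < (\<Sum>C\<in>I. measure \<gamma> C * exp (a C))"
    using \<eta>_I \<gamma>_pos I by (intro sum_pos) auto
  moreover have "(\<Sum>C\<in>I. measure \<gamma> C * exp (a C)) \<le> (\<Sum>C\<in>\<xi>. measure \<gamma> C * exp (a C))"
    using I fin by (intro sum_mono2) auto
  ultimately have "ln (\<Sum>C\<in>I. measure \<gamma> C * exp (a C)) \<le> ln (\<Sum>C\<in>\<xi>. measure \<gamma> C * exp (a C))"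
    by simp
  with finite_donsker_varadhan[OF I(1) \<eta>_pos \<gamma>_pos \<eta>_I, of a] show ?thesis
    by (simp add: KL_I sum_I)
qed

lemma KL_finite_imp_partition_sum_pos:
  assumes "prob_space \<eta>" "finite_measurable_partition \<eta> \<xi>" "KL \<eta> \<gamma> \<xi> \<noteq> \<infinity>"
  shows "0 < (\<Sum>C\<in>\<xi>. measure \<gamma> C * exp (a C))"
proof -
  obtain C where C: "C \<in> \<xi>" "measure \<eta> C \<noteq> 0"
    using sum_measure_prob_partition[OF assms(1,2)] by (metis one_neq_zero sum.neutral)
  then have "measure \<gamma> C > 0"
    using assms(3) by (auto simp: KL_def less_le split: if_splits)
  then show ?thesis
    using C assms(2) by (intro sum_pos2[of _ C]) (auto simp: finite_measurable_partition_def)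
qed

lemma KL_nonneg:
  assumes \<eta>: "prob_space \<eta>" and \<gamma>: "subprob_space \<gamma>" "sets \<gamma> = sets \<eta>"
    and \<xi>: "finite_measurable_partition \<eta> \<xi>"
  shows "0 \<le> KL \<eta> \<gamma> \<xi>"
proof -
  interpret \<gamma>: subprob_space \<gamma> by (rule \<gamma>(1))
  have "finite_measurable_partition \<gamma> \<xi>"
    using \<xi> \<gamma>(2) sets_eq_imp_space_eq[OF \<gamma>(2)] by (simp add: finite_measurable_partition_def)
  then have "(\<Sum>C\<in>\<xi>. measure \<gamma> C) \<le> 1"
    using sum_measure_partition[OF \<gamma>.finite_measure_axioms] \<gamma>.subprob_measure_le_1 by simp
  then have "ln (\<Sum>C\<in>\<xi>. measure \<gamma> C) \<le> 0"
    using sum_nonneg[of \<xi> "measure \<gamma>"] by (cases "(\<Sum>C\<in>\<xi>. measure \<gamma> C) = 0") auto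
  with KL_partition_donsker_varadhan[OF \<eta> \<xi>, of "\<lambda>_. 0" \<gamma>] show ?thesis
    by (cases "KL \<eta> \<gamma> \<xi>") auto
qed

lemma ln_partition_sum_exp_le:
  assumes "finite_measure M" "finite_measurable_partition M \<xi>" "integrable M (\<lambda>p. exp (h p))"
    and "\<And>C p. C \<in> \<xi> \<Longrightarrow> p \<in> C \<Longrightarrow> a C \<le> h p + R"
    and S_pos: "0 < (\<Sum>C\<in>\<xi>. measure M C * exp (a C))"
  shows "ln (\<Sum>C\<in>\<xi>. measure M C * exp (a C)) \<le> ln (\<integral>p. exp (h p) \<partial>M) + R"
proof -
  let ?S = "\<Sum>C\<in>\<xi>. measure M C * exp (a C)"
  have "exp (- R) * ?S = (\<Sum>C\<in>\<xi>. measure M C * exp (a C - R))"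
    by (simp add: sum_distrib_left exp_diff exp_minus field_simps)
  also have "\<dots> \<le> (\<integral>p. exp (h p) \<partial>M)"
    using assms(1-4) by (intro partition_sum_le_integral) (simp_all add: diff_le_eq)
  finally have S_le: "exp (- R) * ?S \<le> (\<integral>p. exp (h p) \<partial>M)" .
  then have "ln (exp (- R) * ?S) \<le> ln (\<integral>p. exp (h p) \<partial>M)"
    using S_pos by (subst ln_le_cancel_iff) (auto intro: less_le_trans[OF _ S_le])
  moreover have "ln (exp (- R) * ?S) = ln ?S - R"
    using S_pos by (simp add: ln_mult)
  ultimately show ?thesis by simp
qed

lemma integral_minus_KL_le:
  fixes h :: "'b \<Rightarrow> real"
  assumes \<eta>: "prob_space \<eta>" and \<gamma>: "subprob_space \<gamma>" "sets \<gamma> = sets \<eta>"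
    and \<xi>: "finite_measurable_partition \<eta> \<xi>"
    and osc: "\<And>C p q. C \<in> \<xi> \<Longrightarrow> p \<in> C \<Longrightarrow> q \<in> C \<Longrightarrow> h p \<le> h q + R" and "R \<ge> 0"
    and bnd: "\<And>p. p \<in> space \<eta> \<Longrightarrow> \<bar>h p\<bar> \<le> B"
  shows "ereal (\<integral>p. h p \<partial>\<eta>) - KL \<eta> \<gamma> \<xi> \<le> ereal (ln (\<integral>p. exp (h p) \<partial>\<gamma>) + R)"
proof (cases "h \<in> borel_measurable \<eta> \<and> KL \<eta> \<gamma> \<xi> \<noteq> \<infinity>")
  case False
  then consider "KL \<eta> \<gamma> \<xi> = \<infinity>" | "h \<notin> borel_measurable \<eta>" by blast
  then show ?thesis
  proof cases
    case 2
    \<comment> \<open>Then both integrals are 0 and the claim reduces to KL \<ge> 0.\<close>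
    then have "\<not> integrable \<eta> h"
      using borel_measurable_integrable by blast
    moreover have "\<not> integrable \<gamma> (\<lambda>p. exp (h p))"
      using 2 borel_measurable_ln[OF borel_measurable_integrable, of \<gamma> "\<lambda>p. exp (h p)"]
      by (auto simp: measurable_cong_sets[OF \<gamma>(2) refl])
    ultimately show ?thesis
      using KL_nonneg[OF \<eta> \<gamma> \<xi>] \<open>R \<ge> 0\<close>
      by (simp add: not_integrable_integral_eq) (cases "KL \<eta> \<gamma> \<xi>"; simp)
  qed simp
next
  case True
  interpret \<eta>: prob_space \<eta> by (rule \<eta>)
  interpret \<gamma>: subprob_space \<gamma> by (rule \<gamma>(1))
  have \<xi>_\<gamma>: "finite_measurable_partition \<gamma> \<xi>"
    using \<xi> \<gamma>(2) sets_eq_imp_space_eq[OF \<gamma>(2)] by (simp add: finite_measurable_partition_def)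
  define a where "a C = (SUP q\<in>C. h q)" for C
  have a: "h q \<le> a C" "a C \<le> h q + R" if "C \<in> \<xi>" "q \<in> C" for C q
  proof -
    have "bdd_above (h ` C)" using osc that by (intro bdd_aboveI2[where M="h q + R"])
    then show "h q \<le> a C" unfolding a_def using that by (intro cSUP_upper)
    show "a C \<le> h q + R" unfolding a_def using that osc by (intro cSUP_least) auto
  qed
  have "integrable \<eta> h"
    using True bnd by (intro \<eta>.integrable_const_bound[where B=B]) auto
  then have "(\<integral>p. h p \<partial>\<eta>) \<le> (\<Sum>C\<in>\<xi>. measure \<eta> C * a C)"
    using a(1) by (intro integral_le_partition_sum[OF \<eta>.finite_measure_axioms \<xi>])
  then have "ereal (\<integral>p. h p \<partial>\<eta>) - KL \<eta> \<gamma> \<xi> \<le> ereal (\<Sum>C\<in>\<xi>. measure \<eta> C * a C) - KL \<eta> \<gamma> \<xi>"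
    by (intro ereal_minus_mono) simp_all
  also have "\<dots> \<le> ereal (ln (\<Sum>C\<in>\<xi>. measure \<gamma> C * exp (a C)))"
    by (rule KL_partition_donsker_varadhan[OF \<eta> \<xi>])
  also have "\<dots> \<le> ereal (ln (\<integral>p. exp (h p) \<partial>\<gamma>) + R)"
  proof -
    have "h \<in> borel_measurable \<gamma>"
      using True by (simp add: measurable_cong_sets[OF \<gamma>(2) refl])
    then have "integrable \<gamma> (\<lambda>p. exp (h p))"
      using bnd sets_eq_imp_space_eq[OF \<gamma>(2)]
      by (intro \<gamma>.integrable_const_bound[where B="exp B"] measurable_compose[OF _ borel_measurable_exp])
        (auto simp: abs_le_iff)
    then show ?thesis
      using a(2) True KL_finite_imp_partition_sum_pos[OF \<eta> \<xi>]
      by (simp add: ln_partition_sum_exp_le[OF \<gamma>.finite_measure_axioms \<xi>_\<gamma>])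
  qed
  finally show ?thesis .
qed

lemma SFT_shift_closed:
  assumes "is_SFT X" "x \<in> X"
  shows "shift x \<in> X"
proof -
  obtain F :: "'a list set" where F: "X = {x. \<forall>w\<in>F. \<forall>i. \<not> (\<forall>j<length w. x (i + int j) = w ! j)}"
    using assms(1) unfolding is_SFT_def by blast
  have "\<not> (\<forall>j<length w. x ((i + 1) + int j) = w ! j)" if "w \<in> F" for w i
    using assms(2) F that by blast
  then show ?thesis
    using F by (auto simp: shift_def algebra_simps)
qed

lemma funpow_shift_closed:
  assumes "\<And>x. x \<in> X \<Longrightarrow> shift x \<in> X" "x \<in> X"
  shows "(shift ^^ k) x \<in> X"
  using assms by (induction k) auto

lemma measurable_shift_MX:
  assumes "\<And>x. x \<in> X \<Longrightarrow> shift x \<in> X"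
  shows "shift \<in> MX X \<rightarrow>\<^sub>M MX X"
proof -
  have "shift \<in> PiM UNIV (\<lambda>_::int. count_space (UNIV :: 'a set)) \<rightarrow>\<^sub>M PiM UNIV (\<lambda>_. count_space UNIV)"
    unfolding shift_def
    by (intro measurable_PiM_single' measurable_component_singleton) (auto simp: space_PiM)
  then show ?thesis
    unfolding MX_def using assms by (intro measurable_restrict_space3) auto
qed

lemma measurable_funpow:
  assumes "f \<in> M \<rightarrow>\<^sub>M M"
  shows "f ^^ k \<in> M \<rightarrow>\<^sub>M M"
  by (induction k) (auto intro: measurable_compose[OF _ assms])

lemma space_MX [simp]: "space (MX X) = X"
  by (simp add: MX_def space_restrict_space space_PiM)

definition join_cell :: "(int \<Rightarrow> 'a) set \<Rightarrow> nat \<Rightarrow> (nat \<Rightarrow> (int \<Rightarrow> 'a) set) \<Rightarrow> (int \<Rightarrow> 'a) set" where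
  "join_cell X n B = {x\<in>X. \<forall>k<n. (shift ^^ k) x \<in> B k}"

lemma join_partition_eq:
  "join_partition X \<beta> n = {C. C \<noteq> {} \<and> (\<exists>B. (\<forall>k<n. B k \<in> \<beta>) \<and> C = join_cell X n B)}"
  by (simp add: join_partition_def join_cell_def)

lemma finite_join_partition:
  assumes "finite \<beta>"
  shows "finite (join_partition X \<beta> n)"
proof (rule finite_subset)
  show "join_partition X \<beta> n \<subseteq> join_cell X n ` (\<Pi>\<^sub>E k\<in>{..<n}. \<beta>)"
  proof
    fix C assume "C \<in> join_partition X \<beta> n"
    then obtain B where B: "\<forall>k<n. B k \<in> \<beta>" "C = join_cell X n B"
      by (auto simp: join_partition_eq)
    then have "C = join_cell X n (restrict B {..<n})"
      by (simp add: join_cell_def)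
    with B(1) show "C \<in> join_cell X n ` (\<Pi>\<^sub>E k\<in>{..<n}. \<beta>)" by auto
  qed
  show "finite (join_cell X n ` (\<Pi>\<^sub>E k\<in>{..<n}. \<beta>))"
    using assms by (simp add: finite_PiE)
qed

lemma disjoint_join_partition:
  assumes "disjoint \<beta>"
  shows "disjoint (join_partition X \<beta> n)"
proof (rule disjointI)
  fix C C' assume C: "C \<in> join_partition X \<beta> n" and C': "C' \<in> join_partition X \<beta> n"
    and "C \<noteq> C'"
  obtain B where B: "\<forall>k<n. B k \<in> \<beta>" "C = join_cell X n B"
    using C by (auto simp: join_partition_eq)
  obtain B' where B': "\<forall>k<n. B' k \<in> \<beta>" "C' = join_cell X n B'"
    using C' by (auto simp: join_partition_eq)
  show "C \<inter> C' = {}"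
  proof (rule ccontr)
    assume "C \<inter> C' \<noteq> {}"
    then obtain z where z: "z \<in> C" "z \<in> C'" by blast
    have "B k = B' k" if "k < n" for k
    proof -
      have "(shift ^^ k) z \<in> B k \<inter> B' k" "B k \<in> \<beta>" "B' k \<in> \<beta>"
        using B B' z that by (auto simp: join_cell_def)
      then show ?thesis using disjointD[OF assms] by blast
    qed
    then have "C = C'"
      using B(2) B'(2) by (auto simp: join_cell_def)
    with \<open>C \<noteq> C'\<close> show False ..
  qed
qed

lemma Union_join_partition:
  assumes "\<Union>\<beta> = X" "\<And>x. x \<in> X \<Longrightarrow> shift x \<in> X"
  shows "\<Union>(join_partition X \<beta> n) = X"
proof
  show "\<Union>(join_partition X \<beta> n) \<subseteq> X"
    by (auto simp: join_partition_eq join_cell_def)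
  show "X \<subseteq> \<Union>(join_partition X \<beta> n)"
  proof
    fix x assume "x \<in> X"
    have "(shift ^^ k) x \<in> X" for k
      using assms(2) \<open>x \<in> X\<close> by (rule funpow_shift_closed)
    then have "\<forall>k. \<exists>B. B \<in> \<beta> \<and> (shift ^^ k) x \<in> B"
      using assms(1) by blast
    then obtain B where B: "\<And>k. B k \<in> \<beta> \<and> (shift ^^ k) x \<in> B k"
      by metis
    then have "x \<in> join_cell X n B" "\<forall>k<n. B k \<in> \<beta>"
      using \<open>x \<in> X\<close> by (auto simp: join_cell_def)
    then show "x \<in> \<Union>(join_partition X \<beta> n)"
      by (auto simp: join_partition_eq)
  qed
qed

lemma join_cell_measurable:
  assumes "\<And>x. x \<in> X \<Longrightarrow> shift x \<in> X" "\<forall>k<n. B k \<in> sets (MX X)"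
  shows "join_cell X n B \<in> sets (MX X)"
proof -
  have "{x \<in> space (MX X). (shift ^^ k) x \<in> B k} \<in> sets (MX X)" if "k < n" for k
  proof -
    have "B k \<in> sets (MX X)" using assms(2) that by blast
    from measurable_sets[OF measurable_funpow[OF measurable_shift_MX[OF assms(1)]] this]
    show ?thesis by (simp only: vimage_def Int_def conj_commute mem_Collect_eq)
  qed
  then have "{x \<in> space (MX X). \<forall>k\<in>{..<n}. (shift ^^ k) x \<in> B k} \<in> sets (MX X)"
    by (intro sets.sets_Collect_finite_All) auto
  then show ?thesis by (simp only: join_cell_def space_MX lessThan_iff Ball_def)
qed

lemma join_partition_finite_measurable_partition:
  assumes \<beta>: "finite_measurable_partition (MX X) \<beta>" and X: "\<And>x. x \<in> X \<Longrightarrow> shift x \<in> X"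
  shows "finite_measurable_partition (MX X) (join_partition X \<beta> n)"
  unfolding finite_measurable_partition_def
proof (intro conjI)
  have \<beta>': "finite \<beta>" "disjoint \<beta>" "\<Union>\<beta> = X" "\<beta> \<subseteq> sets (MX X)"
    using \<beta> by (auto simp: finite_measurable_partition_def)
  show "finite (join_partition X \<beta> n)" using \<beta>'(1) by (rule finite_join_partition)
  show "{} \<notin> join_partition X \<beta> n" by (simp add: join_partition_eq)
  show "disjoint (join_partition X \<beta> n)" using \<beta>'(2) by (rule disjoint_join_partition)
  show "\<Union>(join_partition X \<beta> n) = space (MX X)"
    using Union_join_partition[OF \<beta>'(3) X] by simp
  show "join_partition X \<beta> n \<subseteq> sets (MX X)"
  proof
    fix C assume "C \<in> join_partition X \<beta> n"
    then obtain B where "\<forall>k<n. B k \<in> \<beta>" "C = join_cell X n B"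
      by (auto simp: join_partition_eq)
    with \<beta>'(4) X show "C \<in> sets (MX X)"
      using join_cell_measurable[of X n B] by blast
  qed
qed

lemma cylC_measurable: "cylC X x m \<in> sets (MX X)"
proof -
  have "{z \<in> space (MX X). z i = x i} \<in> sets (MX X)" for i
  proof -
    have "(\<lambda>z. z i) \<in> MX X \<rightarrow>\<^sub>M count_space UNIV"
      unfolding MX_def by (intro measurable_restrict_space1 measurable_component_singleton) simp
    from measurable_sets[OF this, of "{x i}"] show ?thesis
      by (simp only: vimage_def Int_def conj_commute mem_Collect_eq singleton_iff) simp
  qed
  then have "{z \<in> space (MX X). \<forall>i\<in>{- int m..int m}. z i = x i} \<in> sets (MX X)"
    by (intro sets.sets_Collect_finite_All) auto
  moreover have "cylC X x m = {z \<in> space (MX X). \<forall>i\<in>{- int m..int m}. z i = x i}"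
    unfolding cylC_def space_MX by (auto simp: abs_le_iff)
  ultimately show ?thesis by simp
qed

lemma cylC_eq: "z \<in> cylC X x m \<Longrightarrow> cylC X z m = cylC X x m"
  by (auto simp: cylC_def)

lemma finite_central_partition:
  fixes X :: "(int \<Rightarrow> 'a::finite) set"
  shows "finite (central_partition X m)"
proof (rule finite_subset)
  let ?J = "{- int m..int m}" and ?cyl = "\<lambda>w. {z\<in>X. \<forall>i. \<bar>i\<bar> \<le> int m \<longrightarrow> z i = w i}"
  show "central_partition X m \<subseteq> ?cyl ` (\<Pi>\<^sub>E i\<in>?J. UNIV)"
  proof
    fix C assume "C \<in> central_partition X m"
    then obtain x where "C = cylC X x m" by (auto simp: central_partition_def)
    then have "C = ?cyl (restrict x ?J)" by (auto simp: cylC_def)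
    moreover have "restrict x ?J \<in> (\<Pi>\<^sub>E i\<in>?J. UNIV)" by simp
    ultimately show "C \<in> ?cyl ` (\<Pi>\<^sub>E i\<in>?J. UNIV)" by (rule image_eqI)
  qed
  show "finite (?cyl ` (\<Pi>\<^sub>E i\<in>?J. (UNIV :: 'a set)))"
    by (simp add: finite_PiE)
qed

lemma central_partition_finite_measurable_partition:
  fixes X :: "(int \<Rightarrow> 'a::finite) set"
  shows "finite_measurable_partition (MX X) (central_partition X m)"
  unfolding finite_measurable_partition_def
proof (intro conjI)
  show "finite (central_partition X m)" by (rule finite_central_partition)
  show "{} \<notin> central_partition X m"
    by (auto simp: central_partition_def cylC_def)
  show "disjoint (central_partition X m)"
    by (rule disjointI) (auto simp: central_partition_def dest: cylC_eq)
  show "\<Union>(central_partition X m) = space (MX X)"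
    by (auto simp: central_partition_def cylC_def)
  show "central_partition X m \<subseteq> sets (MX X)"
    by (auto simp: central_partition_def cylC_measurable)
qed

lemma dX_le_1: "dX x y \<le> 1"
  by (auto simp: dX_def power_le_one)

lemma dX_le_diamX:
  assumes "p \<in> B" "q \<in> B"
  shows "dX p q \<le> diamX B"
proof -
  have "bdd_above ((\<lambda>p. dX (fst p) (snd p)) ` (B \<times> B))"
    using dX_le_1 by (intro bdd_aboveI2[where M=1])
  then have "dX (fst (p, q)) (snd (p, q)) \<le> (SUP p\<in>B \<times> B. dX (fst p) (snd p))"
    using assms by (intro cSUP_upper) auto
  then show ?thesis using assms by (auto simp: diamX_def)
qed

lemma dX_funpow_shift_lt_on_join_cell:
  assumes "C \<in> join_partition X \<beta> n" "x \<in> C" "x' \<in> C" "k < n" "\<forall>B\<in>\<beta>. diamX B < \<delta>"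
  shows "dX ((shift ^^ k) x) ((shift ^^ k) x') < \<delta>"
proof -
  obtain B where "B \<in> \<beta>" "(shift ^^ k) x \<in> B" "(shift ^^ k) x' \<in> B"
    using assms(1-4) by (auto simp: join_partition_eq join_cell_def)
  then show ?thesis
    using dX_le_diamX assms(5) by (meson order_le_less_trans)
qed

lemma gn_oscillation:
  assumes "\<And>k. k < n \<Longrightarrow>
      \<bar>loss \<theta> ((shift ^^ k) x) ((T ^^ k) y) - loss \<theta>' ((shift ^^ k) x') ((T ^^ k) y)\<bar> \<le> r ((T ^^ k) y)"
  shows "gn loss T n \<theta> x y \<le> gn loss T n \<theta>' x' y + (\<Sum>k<n. r ((T ^^ k) y))"
proof -
  have "(\<Sum>k<n. loss \<theta>' ((shift ^^ k) x') ((T ^^ k) y)) \<le>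
      (\<Sum>k<n. loss \<theta> ((shift ^^ k) x) ((T ^^ k) y) + r ((T ^^ k) y))"
  proof (rule sum_mono)
    fix k assume "k \<in> {..<n}"
    with assms[of k] show "loss \<theta>' ((shift ^^ k) x') ((T ^^ k) y) \<le>
        loss \<theta> ((shift ^^ k) x) ((T ^^ k) y) + r ((T ^^ k) y)"
      by (simp add: abs_le_iff)
  qed
  then show ?thesis by (simp add: gn_def sum.distrib)
qed

lemma abs_gn_le:
  assumes "\<forall>y. \<forall>\<theta>\<in>Th. \<forall>x\<in>X. \<bar>loss \<theta> x y\<bar> \<le> b y" "\<And>x. x \<in> X \<Longrightarrow> shift x \<in> X"
    and "\<theta> \<in> Th" "x \<in> X"
  shows "\<bar>gn loss T n \<theta> x y\<bar> \<le> (\<Sum>k<n. b ((T ^^ k) y))"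
proof -
  have "\<bar>loss \<theta> ((shift ^^ k) x) ((T ^^ k) y)\<bar> \<le> b ((T ^^ k) y)" for k
    using assms(1,3) funpow_shift_closed[of X, OF assms(2) assms(4)] by blast
  then show ?thesis
    unfolding gn_def abs_minus_cancel by (intro order_trans[OF sum_abs] sum_mono)
qed

lemma prod_partition_finite_measurable_partition:
  assumes \<alpha>: "finite_measurable_partition M \<alpha>" and \<beta>: "finite_measurable_partition N \<beta>"
  shows "finite_measurable_partition (M \<Otimes>\<^sub>M N) (prod_partition \<alpha> \<beta>)"
  unfolding finite_measurable_partition_def
proof (intro conjI)
  have \<alpha>': "finite \<alpha>" "{} \<notin> \<alpha>" "disjoint \<alpha>" "\<Union>\<alpha> = space M" "\<alpha> \<subseteq> sets M"
    and \<beta>': "finite \<beta>" "{} \<notin> \<beta>" "disjoint \<beta>" "\<Union>\<beta> = space N" "\<beta> \<subseteq> sets N"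
    using \<alpha> \<beta> by (auto simp: finite_measurable_partition_def)
  have "prod_partition \<alpha> \<beta> = (\<lambda>(A, B). A \<times> B) ` (\<alpha> \<times> \<beta>)"
    by (auto simp: prod_partition_def)
  then show "finite (prod_partition \<alpha> \<beta>)" using \<alpha>'(1) \<beta>'(1) by simp
  show "{} \<notin> prod_partition \<alpha> \<beta>"
    using \<alpha>'(2) \<beta>'(2) by (auto simp: prod_partition_def) (metis Times_empty)
  show "disjoint (prod_partition \<alpha> \<beta>)"
  proof (rule disjointI)
    fix C C' assume "C \<in> prod_partition \<alpha> \<beta>" "C' \<in> prod_partition \<alpha> \<beta>" "C \<noteq> C'"
    then obtain A B A' B' where "A \<in> \<alpha>" "B \<in> \<beta>" "A' \<in> \<alpha>" "B' \<in> \<beta>"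
      and C: "C = A \<times> B" "C' = A' \<times> B'" and "A \<noteq> A' \<or> B \<noteq> B'"
      by (auto simp: prod_partition_def)
    then have "A \<inter> A' = {} \<or> B \<inter> B' = {}"
      using disjointD[OF \<alpha>'(3)] disjointD[OF \<beta>'(3)] by blast
    then show "C \<inter> C' = {}" unfolding C by blast
  qed
  show "\<Union>(prod_partition \<alpha> \<beta>) = space (M \<Otimes>\<^sub>M N)"
  proof
    show "\<Union>(prod_partition \<alpha> \<beta>) \<subseteq> space (M \<Otimes>\<^sub>M N)"
      using \<alpha>'(4) \<beta>'(4) by (auto simp: prod_partition_def space_pair_measure)
    show "space (M \<Otimes>\<^sub>M N) \<subseteq> \<Union>(prod_partition \<alpha> \<beta>)"
    proof
      fix p assume "p \<in> space (M \<Otimes>\<^sub>M N)"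
      then have "fst p \<in> \<Union>\<alpha>" "snd p \<in> \<Union>\<beta>"
        using \<alpha>'(4) \<beta>'(4) by (auto simp: space_pair_measure mem_Times_iff)
      then obtain A B where "A \<in> \<alpha>" "B \<in> \<beta>" "p \<in> A \<times> B"
        by (auto simp: mem_Times_iff)
      then show "p \<in> \<Union>(prod_partition \<alpha> \<beta>)"
        by (auto simp: prod_partition_def)
    qed
  qed
  show "prod_partition \<alpha> \<beta> \<subseteq> sets (M \<Otimes>\<^sub>M N)"
    using \<alpha>'(5) \<beta>'(5) by (auto simp: prod_partition_def)
qed

lemma finite_measurable_partition_cong_sets:
  assumes "sets M = sets N"
  shows "finite_measurable_partition M \<xi> \<longleftrightarrow> finite_measurable_partition N \<xi>"
  using assms sets_eq_imp_space_eq[OF assms] by (simp add: finite_measurable_partition_def)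

lemma sets_P0: "sets (P0 Th X \<pi>0 \<mu>) = sets (MT Th \<Otimes>\<^sub>M MX X)"
proof -
  interpret sigma_algebra "space (MT Th \<Otimes>\<^sub>M MX X)" "sets (MT Th \<Otimes>\<^sub>M MX X)"
    by (rule sets.sigma_algebra_axioms)
  show ?thesis unfolding P0_def by simp
qed

lemma space_MT_MX: "space (MT Th \<Otimes>\<^sub>M MX X) = Th \<times> X"
  by (simp add: space_pair_measure MT_def space_restrict_space)

lemma subprob_space_P0:
  assumes "prob_space \<pi>0" "sets \<pi>0 = sets (MT Th)"
    and "\<And>\<theta>. \<theta> \<in> Th \<Longrightarrow> prob_space (\<mu> \<theta>) \<and> sets (\<mu> \<theta>) = sets (MX X)"
    and "Th \<noteq> {}" "X \<noteq> {}"
  shows "subprob_space (P0 Th X \<pi>0 \<mu>)"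
proof (rule subprob_spaceI)
  interpret sigma_algebra "space (MT Th \<Otimes>\<^sub>M MX X)" "sets (MT Th \<Otimes>\<^sub>M MX X)"
    by (rule sets.sigma_algebra_axioms)
  have space_P0: "space (P0 Th X \<pi>0 \<mu>) = Th \<times> X"
    using sets_eq_imp_space_eq[OF sets_P0] by (simp add: space_MT_MX)
  then show "space (P0 Th X \<pi>0 \<mu>) \<noteq> {}" using assms(4,5) by simp
  have space_\<pi>0: "space \<pi>0 = Th"
    using sets_eq_imp_space_eq[OF assms(2)] by (simp add: MT_def space_restrict_space)
  have "(\<integral>\<^sup>+ x. indicator (Th \<times> X) (\<theta>, x) \<partial>\<mu> \<theta>) \<le> 1" if "\<theta> \<in> space \<pi>0" for \<theta>
  proof -
    have "(\<integral>\<^sup>+ x. indicator (Th \<times> X) (\<theta>, x) \<partial>\<mu> \<theta>) \<le> (\<integral>\<^sup>+ x. 1 \<partial>\<mu> \<theta>)"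
      by (intro nn_integral_mono) (simp add: indicator_def)
    also have "\<dots> = 1"
      using assms(3) that space_\<pi>0 by (simp add: prob_space.emeasure_space_1)
    finally show ?thesis .
  qed
  then have "(\<integral>\<^sup>+ \<theta>. (\<integral>\<^sup>+ x. indicator (Th \<times> X) (\<theta>, x) \<partial>\<mu> \<theta>) \<partial>\<pi>0) \<le> (\<integral>\<^sup>+ \<theta>. 1 \<partial>\<pi>0)"
    by (intro nn_integral_mono)
  also have "\<dots> = 1"
    using assms(1) by (simp add: prob_space.emeasure_space_1)
  finally show "emeasure (P0 Th X \<pi>0 \<mu>) (space (P0 Th X \<pi>0 \<mu>)) \<le> 1"
    unfolding space_P0 unfolding P0_def by (simp add: emeasure_measure_of_conv space_MT_MX)
qed

lemma gn_oscillation_on_prod_partition: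
  assumes \<rho>: "\<forall>\<theta>\<in>Th. \<forall>\<theta>'\<in>Th. \<forall>x\<in>X. \<forall>x'\<in>X. \<forall>y.
      max (dist \<theta> \<theta>') (dX x x') \<le> \<delta> \<longrightarrow> \<bar>loss \<theta> x y - loss \<theta>' x' y\<bar> \<le> \<rho> y"
    and shift_X: "\<And>x. x \<in> X \<Longrightarrow> shift x \<in> X"
    and \<alpha>: "\<Union>\<alpha> \<subseteq> Th" "bounded Th" "\<forall>A\<in>\<alpha>. diameter A < \<delta>"
    and \<beta>: "\<forall>B\<in>\<beta>. diamX B < \<delta>"
    and C: "C \<in> prod_partition \<alpha> (join_partition X \<beta> n)" "p \<in> C" "q \<in> C"
  shows "gn loss T n (fst p) (snd p) y \<le> gn loss T n (fst q) (snd q) y + (\<Sum>k<n. \<rho> ((T ^^ k) y))"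
proof (rule gn_oscillation)
  obtain A D where A: "A \<in> \<alpha>" and D: "D \<in> join_partition X \<beta> n" and "C = A \<times> D"
    using C(1) by (auto simp: prod_partition_def)
  then have pq: "fst p \<in> A" "fst q \<in> A" "snd p \<in> D" "snd q \<in> D"
    using C(2,3) by auto
  have "A \<subseteq> Th" using A \<alpha>(1) by blast
  then have "dist (fst p) (fst q) \<le> diameter A"
    using pq by (intro diameter_bounded_bound bounded_subset[OF \<alpha>(2)])
  with A \<alpha>(3) have dist_le: "dist (fst p) (fst q) \<le> \<delta>" by fastforce
  have "D \<subseteq> X" using D by (auto simp: join_partition_eq join_cell_def)
  fix k assume "k < n"
  with D pq \<beta> have "dX ((shift ^^ k) (snd p)) ((shift ^^ k) (snd q)) < \<delta>"
    by (intro dX_funpow_shift_lt_on_join_cell)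
  moreover have "(shift ^^ k) (snd p) \<in> X" "(shift ^^ k) (snd q) \<in> X"
    using shift_X \<open>D \<subseteq> X\<close> pq by (auto intro: funpow_shift_closed)
  ultimately show "\<bar>loss (fst p) ((shift ^^ k) (snd p)) ((T ^^ k) y)
      - loss (fst q) ((shift ^^ k) (snd q)) ((T ^^ k) y)\<bar> \<le> \<rho> ((T ^^ k) y)"
    using dist_le \<rho> \<open>A \<subseteq> Th\<close> pq by (meson less_imp_le max.boundedI subsetD)
qed

theorem lemma7p2:
  fixes X :: "(int \<Rightarrow> 'a::finite) set"
    and Th :: "'t::metric_space set"
    and T :: "'y::polish_space \<Rightarrow> 'y"
    and \<nu> :: "'y measure"
    and f :: "'t \<Rightarrow> (int \<Rightarrow> 'a) \<Rightarrow> real"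
    and \<mu> :: "'t \<Rightarrow> (int \<Rightarrow> 'a) measure"
    and \<pi>0 :: "'t measure"
    and loss :: "'t \<Rightarrow> (int \<Rightarrow> 'a) \<Rightarrow> 'y \<Rightarrow> real"
    and lstar :: "'y \<Rightarrow> real"
    and \<rho> :: "real \<Rightarrow> 'y \<Rightarrow> real"
    and \<delta> :: real
    and \<alpha> :: "'t set set"
    and \<beta> :: "(int \<Rightarrow> 'a) set set"
    and \<eta> :: "('t \<times> (int \<Rightarrow> 'a)) measure"
    and y :: 'y
    and n :: nat
  assumes Y_sys: "prob_space \<nu>" "sets \<nu> = sets borel" "T \<in> borel_measurable borel"
      "ergodic_invariant \<nu> T"
    and X_sft: "mixing_SFT X"
    and Th_cpt: "compact Th" "Th \<noteq> {}"
    and f_reg: "regular_family Th X f"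
    and mu_gibbs: "\<forall>\<theta>\<in>Th. gibbs_measure X (f \<theta>) (\<mu> \<theta>)"
    and l_cont: "\<forall>\<theta>\<in>Th. \<forall>x\<in>X. \<forall>y. \<forall>\<epsilon>>0. \<exists>d>0. \<forall>\<theta>'\<in>Th. \<forall>x'\<in>X. \<forall>y'.
         dist \<theta> \<theta>' < d \<and> dX x x' < d \<and> dist y y' < d \<longrightarrow> \<bar>loss \<theta>' x' y' - loss \<theta> x y\<bar> < \<epsilon>"
    and l_bound: "\<forall>y. \<forall>\<theta>\<in>Th. \<forall>x\<in>X. \<bar>loss \<theta> x y\<bar> \<le> lstar y"
    and lstar_int: "integrable \<nu> lstar"
    and rho_meas: "\<forall>d>0. \<rho> d \<in> borel_measurable borel \<and> (\<forall>y. \<rho> d y > 0)"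
    and rho_bound: "\<forall>d>0. \<forall>\<theta>\<in>Th. \<forall>\<theta>'\<in>Th. \<forall>x\<in>X. \<forall>x'\<in>X. \<forall>y.
         max (dist \<theta> \<theta>') (dX x x') \<le> d \<longrightarrow> \<bar>loss \<theta> x y - loss \<theta>' x' y\<bar> \<le> \<rho> d y"
    and rho_lim: "((\<lambda>d. \<integral>\<^sup>+ y. ennreal (\<rho> d y) \<partial>\<nu>) \<longlongrightarrow> 0) (at_right 0)"
    and prior: "prob_space \<pi>0" "sets \<pi>0 = sets (MT Th)"
      "\<forall>U. open U \<and> U \<inter> Th \<noteq> {} \<longrightarrow> emeasure \<pi>0 (U \<inter> Th) > 0"
    and delta_pos: "\<delta> > 0"
    and alpha_part: "finite_measurable_partition (MT Th) \<alpha>"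
    and alpha_diam: "\<forall>A\<in>\<alpha>. diameter A < \<delta>"
    and beta_part: "is_central_word_partition X \<beta>"
    and beta_diam: "\<forall>B\<in>\<beta>. diamX B < \<delta>"
    and eta_prob: "prob_space \<eta>" "sets \<eta> = sets (MT Th \<Otimes>\<^sub>M MX X)"
    and n_pos: "n \<ge> 1"
  shows "ereal (\<integral> p. gn loss T n (fst p) (snd p) y \<partial>\<eta>)
           - KL \<eta> (P0 Th X \<pi>0 \<mu>) (prod_partition \<alpha> (join_partition X \<beta> n))
         \<le> ereal (ln (\<integral> p. exp (gn loss T n (fst p) (snd p) y) \<partial>(P0 Th X \<pi>0 \<mu>))
                  + (\<Sum>k<n. \<rho> \<delta> ((T ^^ k) y)))"
proof -
  obtain m where m: "\<beta> = central_partition X m"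
    using beta_part unfolding is_central_word_partition_def by blast
  have shift_X: "\<And>x. x \<in> X \<Longrightarrow> shift x \<in> X"
    using X_sft SFT_shift_closed by (auto simp: mixing_SFT_def)
  let ?\<xi> = "prod_partition \<alpha> (join_partition X \<beta> n)"
  have "finite_measurable_partition (MT Th \<Otimes>\<^sub>M MX X) ?\<xi>"
    unfolding m by (intro prod_partition_finite_measurable_partition alpha_part
        join_partition_finite_measurable_partition central_partition_finite_measurable_partition shift_X)
  then have \<xi>: "finite_measurable_partition \<eta> ?\<xi>"
    using finite_measurable_partition_cong_sets[OF eta_prob(2)] by simp
  have P0: "subprob_space (P0 Th X \<pi>0 \<mu>)"
    using X_sft mu_gibbs Th_cpt(2)
    by (intro subprob_space_P0 prior(1,2)) (auto simp: gibbs_measure_def mixing_SFT_def)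
  have \<alpha>: "\<Union>\<alpha> \<subseteq> Th"
    using alpha_part by (simp add: finite_measurable_partition_def MT_def space_restrict_space)
  have space_\<eta>: "space \<eta> = Th \<times> X"
    using sets_eq_imp_space_eq[OF eta_prob(2)] by (simp add: space_MT_MX)
  show ?thesis
  proof (rule integral_minus_KL_le[OF eta_prob(1) P0 _ \<xi>])
    show "sets (P0 Th X \<pi>0 \<mu>) = sets \<eta>" using eta_prob(2) by (simp add: sets_P0)
    show "0 \<le> (\<Sum>k<n. \<rho> \<delta> ((T ^^ k) y))"
      using rho_meas delta_pos by (intro sum_nonneg) (simp add: less_imp_le)
    show "gn loss T n (fst p) (snd p) y \<le> gn loss T n (fst q) (snd q) y + (\<Sum>k<n. \<rho> \<delta> ((T ^^ k) y))"
      if "C \<in> ?\<xi>" "p \<in> C" "q \<in> C" for C p q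
      using rho_bound delta_pos shift_X \<alpha> compact_imp_bounded[OF Th_cpt(1)] alpha_diam beta_diam that
      by (intro gn_oscillation_on_prod_partition[where \<beta>=\<beta>]) auto
    show "\<bar>gn loss T n (fst p) (snd p) y\<bar> \<le> (\<Sum>k<n. lstar ((T ^^ k) y))" if "p \<in> space \<eta>" for p
      using that space_\<eta> by (intro abs_gn_le[OF l_bound shift_X]) (auto simp: mem_Times_iff)
  qed
qed

end
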